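(* Let $k\ge 2$ be an even integer and $\ell\ge 2$ an integer. Then the rational number $$\frac{(k+1)(\ell-1)B_k}{\ell^{k+1}-1}$$ has $2$-adic valuation exactly $-1$. Consequently, for every integer $n\ge 2$ dividing $k$, there is no polynomial $f\in\mathbb{Q}[x]$ with $$\frac{B_{k+1}(\ell x+1)-B_{k+1}(x+1)}{x}=(\ell^{k+1}-1)f(x)^n.$$
   Context: $B_i$ denote the Bernoulli numbers ($B_0=1$, $B_1=-1/2$, $B_2=1/6,\dots$) and $B_q(x)=\sum_{i=0}^{q}\binom{q}{i}B_i x^{q-i}$ the Bernoulli polynomials. The $2$-adic valuation of a nonzero rational $a/b$ is $v_2(a)-v_2(b)$. *)

theory Defs
  imports "HOL-Computational_Algebra.Computational_Algebra"
begin

text \<open>Bernoulli numbers with B_0 = 1, B_1 = -1/2, defined by the standard recursion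
  sum_{i=0}^{m} (m+1 choose i) B_i = 0 for m >= 1.\<close>
fun bernoulli :: "nat \<Rightarrow> rat" where
  "bernoulli n = (if n = 0 then 1
     else - (\<Sum>i<n. of_nat (Suc n choose i) * bernoulli i) / of_nat (Suc n))"

definition bernpoly :: "nat \<Rightarrow> rat \<Rightarrow> rat" where
  "bernpoly q x = (\<Sum>i\<le>q. of_nat (q choose i) * bernoulli i * x ^ (q - i))"

definition val2 :: "rat \<Rightarrow> int" where
  "val2 r = (case quotient_of r of (a, b) \<Rightarrow>
      int (multiplicity (2::int) a) - int (multiplicity (2::int) b))"

lemma "bernoulli 0 = 1" "bernoulli 1 = -1/2" "bernoulli 2 = 1/6"
  by (simp_all add: numeral_2_eq_2)

end

theory Submission
  imports Defs
begin

text \<open>Let Z_(2) be the rationals with odd denominator. Induction on the recurrence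
  sum_{i<m} (m+1 choose i) B_i = -(m+1) B_m shows 2 B_k \<in> 1 + 2 Z_(2) for even k \<ge> 2: the odd
  Bernoulli numbers beyond B_1 vanish (read off from E(-x) = E(x) + x for E(x) = x/(e^x - 1)),
  and the even-index binomial coefficients of m+1 sum to 2^m. As l^(k+1) - 1 = (l - 1)(1 + l + ... + l^k)
  with an odd second factor, and k + 1 is odd, the ratio has 2-adic valuation -1.

  The polynomial G(x) = B_{k+1}(l x + 1) - B_{k+1}(x + 1) vanishes at 0 and has linear coefficient
  (k + 1)(l - 1) B_k. So G(x)/x = (l^(k+1) - 1) f(x)^n would make the ratio equal to f(0)^n, whose
  valuation is divisible by n; only n \<ge> 2 is needed, not n dvd k.\<close>

declare bernoulli.simps [simp del]

lemma bernoulli_0 [simp]: "bernoulli 0 = 1"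
  by (simp add: bernoulli.simps)

lemma bernoulli_1: "bernoulli (Suc 0) = - 1 / 2"
  by (simp add: bernoulli.simps)

lemma bernoulli_recurrence:
  assumes "m \<ge> 1"
  shows "(\<Sum>i\<le>m. of_nat (Suc m choose i) * bernoulli i) = 0"
proof -
  have "of_nat (Suc m) * bernoulli m = - (\<Sum>i<m. of_nat (Suc m choose i) * bernoulli i)"
    using assms by (subst bernoulli.simps) (simp add: field_simps del: of_nat_Suc)
  then show ?thesis
    by (simp add: lessThan_Suc_atMost[symmetric] del: of_nat_Suc)
qed

lemma sum_binomial_bernoulli:
  assumes "m \<ge> 2"
  shows "(\<Sum>i\<le>m. of_nat (m choose i) * bernoulli i) = bernoulli m"
proof -
  obtain n where "m = Suc n" and "n \<ge> 1"
    using assms by (cases m) auto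
  then show ?thesis
    using bernoulli_recurrence[of n] by simp
qed

definition bernoulli_egf :: "rat fps" where
  "bernoulli_egf = Abs_fps (\<lambda>n. bernoulli n / fact n)"

definition expm1_over_X :: "rat fps" where
  "expm1_over_X = Abs_fps (\<lambda>n. 1 / fact (Suc n))"

lemma fps_X_times_expm1_over_X: "fps_X * expm1_over_X = fps_exp 1 - 1"
proof (rule fps_ext)
  fix n
  show "(fps_X * expm1_over_X) $ n = (fps_exp 1 - 1) $ n"
    by (cases n) (simp_all add: expm1_over_X_def algebra_simps)
qed

lemma bernoulli_egf_times_expm1_over_X: "bernoulli_egf * expm1_over_X = 1"
proof (rule fps_ext)
  fix n
  have "(bernoulli_egf * expm1_over_X) $ n = (\<Sum>i\<le>n. bernoulli i / fact i / fact (Suc n - i))"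
    by (simp add: fps_mult_nth bernoulli_egf_def expm1_over_X_def atLeast0AtMost Suc_diff_le)
  also have "\<dots> = (\<Sum>i\<le>n. of_nat (Suc n choose i) * bernoulli i) / fact (Suc n)"
    unfolding sum_divide_distrib
    by (intro sum.cong refl) (simp add: binomial_fact del: of_nat_Suc fact_Suc)
  also have "\<dots> = (1 :: rat fps) $ n"
    by (cases "n = 0") (simp_all add: bernoulli_recurrence)
  finally show "(bernoulli_egf * expm1_over_X) $ n = (1 :: rat fps) $ n" .
qed

lemma expm1_over_X_compose_neg: "expm1_over_X oo - fps_X = fps_exp (-1) * expm1_over_X"
proof -
  have "fps_X * (expm1_over_X oo - fps_X) = - ((fps_X * expm1_over_X) oo - fps_X)"
    by (simp add: fps_compose_mult_distrib fps_compose_uminus)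
  also have "\<dots> = 1 - fps_exp (-1)"
    by (simp add: fps_X_times_expm1_over_X fps_compose_sub_distrib)
  also have "\<dots> = fps_exp (-1) * (fps_X * expm1_over_X)"
    unfolding fps_X_times_expm1_over_X right_diff_distrib by (simp flip: fps_exp_add_mult)
  finally show ?thesis
    by (metis mult.left_commute mult_cancel_left fps_X_neq_zero)
qed

lemma bernoulli_egf_compose_neg: "bernoulli_egf oo - fps_X = bernoulli_egf + fps_X"
proof -
  let ?D = "fps_exp (-1) * expm1_over_X"
  have "expm1_over_X $ 0 \<noteq> 0"
    by (simp add: expm1_over_X_def)
  then have "?D \<noteq> 0"
    by auto
  have "(bernoulli_egf oo - fps_X) * ?D = 1"
    by (simp flip: expm1_over_X_compose_neg fps_compose_mult_distrib
             add: bernoulli_egf_times_expm1_over_X)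
  also have "(1 :: rat fps) = fps_exp (-1) * fps_exp 1"
    by (simp flip: fps_exp_add_mult)
  also have "\<dots> = fps_exp (-1) * (bernoulli_egf * expm1_over_X + fps_X * expm1_over_X)"
    by (simp add: bernoulli_egf_times_expm1_over_X fps_X_times_expm1_over_X)
  also have "\<dots> = (bernoulli_egf + fps_X) * ?D"
    by (simp add: algebra_simps)
  finally show ?thesis
    using \<open>?D \<noteq> 0\<close> by simp
qed

lemma bernoulli_odd_eq_0:
  assumes "odd n" and "n \<noteq> 1"
  shows "bernoulli n = 0"
proof -
  have "(bernoulli_egf oo - fps_X) $ n = (bernoulli_egf + fps_X) $ n"
    by (simp only: bernoulli_egf_compose_neg)
  then show ?thesis
    using assms by (simp add: fps_compose_uminus' bernoulli_egf_def)
qed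

definition two_adic_int :: "rat \<Rightarrow> bool" where
  "two_adic_int r \<longleftrightarrow> (\<exists>a b::int. odd b \<and> r = of_int a / of_int b)"

lemma two_adic_int_of_int [simp]: "two_adic_int (of_int a)"
  unfolding two_adic_int_def by (rule exI[of _ a], rule exI[of _ 1]) simp

lemma two_adic_int_0 [simp]: "two_adic_int 0"
  using two_adic_int_of_int[of 0] by simp

lemma two_adic_int_of_nat [simp]: "two_adic_int (of_nat n)"
  using two_adic_int_of_int[of "int n"] by simp

lemma two_adic_int_add: "two_adic_int x \<Longrightarrow> two_adic_int y \<Longrightarrow> two_adic_int (x + y)"
  unfolding two_adic_int_def
proof (elim exE conjE)
  fix a b c d :: int
  assume "odd b" "x = of_int a / of_int b" "odd d" "y = of_int c / of_int d"
  moreover from \<open>odd b\<close> \<open>odd d\<close> have "b \<noteq> 0" "d \<noteq> 0"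
    by auto
  ultimately show "\<exists>a b. odd b \<and> x + y = of_int a / of_int b"
    by (intro exI[of _ "a * d + c * b"] exI[of _ "b * d"]) (simp add: field_simps)
qed

lemma two_adic_int_mult: "two_adic_int x \<Longrightarrow> two_adic_int y \<Longrightarrow> two_adic_int (x * y)"
  unfolding two_adic_int_def
proof (elim exE conjE)
  fix a b c d :: int
  assume "odd b" "x = of_int a / of_int b" "odd d" "y = of_int c / of_int d"
  then show "\<exists>a b. odd b \<and> x * y = of_int a / of_int b"
    by (intro exI[of _ "a * c"] exI[of _ "b * d"]) simp
qed

lemma two_adic_int_diff: "two_adic_int x \<Longrightarrow> two_adic_int y \<Longrightarrow> two_adic_int (x - y)"
  using two_adic_int_add[of x "(-1) * y"] two_adic_int_mult[of "-1" y]
  by (metis two_adic_int_of_int of_int_minus of_int_1 mult_minus1 diff_conv_add_uminus)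

lemma two_adic_int_divide_odd: "two_adic_int x \<Longrightarrow> odd c \<Longrightarrow> two_adic_int (x / of_int c)"
  unfolding two_adic_int_def
proof (elim exE conjE)
  fix a b :: int
  assume "odd b" "x = of_int a / of_int b" "odd c"
  then show "\<exists>a b. odd b \<and> x / of_int c = of_int a / of_int b"
    by (intro exI[of _ a] exI[of _ "b * c"]) simp
qed

lemma two_adic_int_sum: "(\<And>i. i \<in> A \<Longrightarrow> two_adic_int (f i)) \<Longrightarrow> two_adic_int (\<Sum>i\<in>A. f i)"
  by (induction A rule: infinite_finite_induct) (simp_all add: two_adic_int_add)

text \<open>For i \<ge> 2 this is the residue of 2 B_i modulo 2 Z_(2) (von Staudt--Clausen at the prime 2);
  for i \<le> 1 it is 2 B_i itself.\<close>
definition bernoulli_residue2 :: "nat \<Rightarrow> int" where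
  "bernoulli_residue2 i = (if i = 0 then 2 else if i = 1 then -1 else if even i then 1 else 0)"

lemma sum_binomial_bernoulli_residue2:
  assumes "even m" and "m \<ge> 2"
  shows "(\<Sum>i<m. int (Suc m choose i) * bernoulli_residue2 i) = 2 ^ m - 2 * int m - 1"
proof -
  have "(\<Sum>i<m. int (Suc m choose i) * bernoulli_residue2 i)
      = (\<Sum>i<m. (if even i then int (Suc m choose i) else 0)
                 + (if i = 0 then 1 else 0) - (if i = 1 then int (Suc m) else 0))"
    by (rule sum.cong) (auto simp: bernoulli_residue2_def)
  also have "\<dots> = (\<Sum>i\<le>Suc m. if even i then int (Suc m choose i) else 0) - int (Suc m) + 1 - int (Suc m)"
    using assms by (simp add: sum.distrib sum_subtractf lessThan_Suc_atMost[symmetric])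
  also have "(\<Sum>i\<le>Suc m. if even i then int (Suc m choose i) else 0) = 2 ^ m"
    using choose_even_sum[of "Suc m", where 'a = int] by simp
  finally show ?thesis
    by simp
qed

lemma bernoulli_residue2_step:
  assumes "even m" and "m \<ge> 2"
    and IH: "\<And>i. i < m \<Longrightarrow> two_adic_int (bernoulli i - of_int (bernoulli_residue2 i) / 2)"
  shows "two_adic_int (bernoulli m - 1 / 2)"
proof -
  define W where "W = (\<Sum>i<m. of_nat (Suc m choose i) * (bernoulli i - of_int (bernoulli_residue2 i) / 2))"
  have "two_adic_int W"
    unfolding W_def by (intro two_adic_int_sum two_adic_int_mult two_adic_int_of_nat IH) simp
  have "of_nat (Suc m) * bernoulli m = - (\<Sum>i<m. of_nat (Suc m choose i) * bernoulli i)"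
    using bernoulli_recurrence[of m] assms
    by (simp add: lessThan_Suc_atMost[symmetric] del: of_nat_Suc)
  also have "(\<Sum>i<m. of_nat (Suc m choose i) * bernoulli i)
      = W + of_int (\<Sum>i<m. int (Suc m choose i) * bernoulli_residue2 i) / 2"
    by (simp add: W_def algebra_simps sum.distrib sum_subtractf sum_divide_distrib)
  also have "(\<Sum>i<m. int (Suc m choose i) * bernoulli_residue2 i) = 2 ^ m - 2 * int m - 1"
    using assms(1,2) by (rule sum_binomial_bernoulli_residue2)
  finally have rec: "of_nat (Suc m) * bernoulli m = - W - (2 ^ m - 2 * of_nat m - 1) / 2"
    by simp
  obtain j where j: "m = 2 * j"
    using assms by blast
  have "bernoulli m - 1 / 2 = (of_int (int j - 2 ^ (m - 1)) - W) / of_int (int (Suc m))"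
  proof -
    have "(2::rat) ^ m = 2 * 2 ^ (m - 1)"
      using assms by (simp flip: power_Suc)
    then show ?thesis
      using rec j by (simp add: field_simps del: of_nat_Suc)
  qed
  moreover have "two_adic_int ((of_int (int j - 2 ^ (m - 1)) - W) / of_int (int (Suc m)))"
    using \<open>even m\<close>
    by (intro two_adic_int_divide_odd two_adic_int_diff two_adic_int_of_int \<open>two_adic_int W\<close>) simp
  ultimately show ?thesis
    by simp
qed

lemma bernoulli_residue2: "two_adic_int (bernoulli i - of_int (bernoulli_residue2 i) / 2)"
proof (induction i rule: less_induct)
  case (less i)
  consider "i = 0" | "i = 1" | "odd i" "i \<noteq> 1" | "even i" "i \<ge> 2"
    by (cases "even i"; cases "i \<le> 1") (auto simp: le_Suc_eq)
  then show ?case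
  proof cases
    case 4
    then show ?thesis
      using bernoulli_residue2_step[of i] less.IH by (simp add: bernoulli_residue2_def)
  qed (auto simp: bernoulli_residue2_def bernoulli_1 bernoulli_odd_eq_0)
qed

lemma prime_elem_two_int: "prime_elem (2 :: int)"
  by (simp add: prime_imp_prime_elem)

lemma val2_of_int_divide:
  fixes a b :: int
  assumes "a \<noteq> 0" and "b \<noteq> 0"
  shows "val2 (of_int a / of_int b) = int (multiplicity 2 a) - int (multiplicity 2 b)"
proof -
  obtain p q where pq: "quotient_of (of_int a / of_int b) = (p, q)"
    by fastforce
  have "q > 0"
    using pq by (rule quotient_of_denom_pos)
  have "of_int a / of_int b = (of_int p / of_int q :: rat)"
    using pq by (rule quotient_of_div)
  then have "a * q = p * b"
    using assms \<open>q > 0\<close> by (simp add: field_simps flip: of_int_mult)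
  moreover from this have "p \<noteq> 0"
    using assms \<open>q > 0\<close> by auto
  ultimately have "multiplicity 2 a + multiplicity 2 q = multiplicity 2 p + multiplicity (2::int) b"
    using assms \<open>q > 0\<close>
    by (metis prime_elem_multiplicity_mult_distrib[OF prime_elem_two_int] less_irrefl)
  then show ?thesis
    by (simp add: val2_def pq)
qed

lemma val2_power: "val2 (x ^ n) = int n * val2 x"
proof -
  obtain p q where pq: "quotient_of x = (p, q)"
    by fastforce
  have x: "x = of_int p / of_int q" and "q > 0"
    using pq by (rule quotient_of_div, rule quotient_of_denom_pos)
  show ?thesis
  proof (cases "p = 0")
    case True
    then show ?thesis
      using x by (cases n) (simp_all add: val2_def)
  next
    case False
    have "val2 (x ^ n) = val2 (of_int (p ^ n) / of_int (q ^ n))"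
      by (simp add: x power_divide)
    also have "\<dots> = int (multiplicity 2 (p ^ n)) - int (multiplicity 2 (q ^ n))"
      using False \<open>q > 0\<close> by (intro val2_of_int_divide) auto
    also have "\<dots> = int n * (int (multiplicity 2 p) - int (multiplicity 2 q))"
      using False \<open>q > 0\<close>
      by (simp add: prime_elem_multiplicity_power_distrib[OF prime_elem_two_int] algebra_simps)
    also have "\<dots> = int n * val2 x"
      by (simp add: val2_def pq)
    finally show ?thesis .
  qed
qed

lemma val2_power_neq_minus_one:
  assumes "n \<ge> 2"
  shows "val2 (x ^ n) \<noteq> -1"
proof
  assume "val2 (x ^ n) = -1"
  then have "int n dvd 1"
    by (metis val2_power dvd_minus_iff dvd_triv_left)
  with assms show False
    by simp
qed

lemma val2_odd_divide_double_odd: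
  fixes a b :: int
  assumes "odd a" and "odd b"
  shows "val2 (of_int a / of_int (2 * b)) = -1"
proof -
  have "multiplicity 2 a = 0" and "multiplicity 2 b = 0"
    using assms by (simp_all add: not_dvd_imp_multiplicity_0)
  moreover have "multiplicity 2 (2 * b) = Suc (multiplicity 2 b)"
    by (rule multiplicity_times_same) (use assms in auto)
  moreover have "a \<noteq> 0" and "2 * b \<noteq> 0"
    using assms by auto
  ultimately show ?thesis
    by (subst val2_of_int_divide) simp_all
qed

lemma odd_sum_powers:
  fixes l :: nat
  assumes "even k"
  shows "odd (\<Sum>j\<le>k. l ^ j)"
proof -
  obtain t where "k = 2 * t"
    using assms by blast
  moreover have "odd (\<Sum>j\<le>2 * t. l ^ j)"
  proof (induction t)
    case (Suc t)
    have "(\<Sum>j\<le>2 * Suc t. l ^ j) = (\<Sum>j\<le>2 * t. l ^ j) + l ^ (2 * t) * (l * (l + 1))"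
      by (simp add: algebra_simps)
    moreover have "even (l ^ (2 * t) * (l * (l + 1)))"
      by simp
    ultimately show ?case
      using Suc.IH by simp
  qed simp
  ultimately show ?thesis
    by simp
qed

lemma val2_bernoulli_ratio:
  fixes k l :: nat
  assumes "even k" and "k \<ge> 2" and "l \<ge> 2"
  shows "val2 (of_nat (k + 1) * (of_nat l - 1) * bernoulli k / (of_nat l ^ (k + 1) - 1)) = -1"
proof -
  obtain a b where "odd b" and ab: "bernoulli k - 1 / 2 = of_int a / of_int b"
    using bernoulli_residue2[of k] assms(1,2) by (auto simp: two_adic_int_def bernoulli_residue2_def)
  define s where "s = (\<Sum>j\<le>k. l ^ j)"
  have "odd s"
    unfolding s_def using assms(1) by (rule odd_sum_powers)
  have geom: "(of_nat l :: rat) ^ (k + 1) - 1 = (of_nat l - 1) * of_nat s"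
    using power_diff_1_eq[of "of_nat l :: rat" "k + 1"] by (simp add: s_def lessThan_Suc_atMost)
  have bk: "bernoulli k = of_int (b + 2 * a) / of_int (2 * b)"
  proof -
    have "b \<noteq> 0"
      using \<open>odd b\<close> by auto
    then show ?thesis
      using ab by (simp add: field_simps)
  qed
  have "(of_nat l :: rat) - 1 \<noteq> 0" and "(of_nat s :: rat) \<noteq> 0"
    using assms(3) odd_pos[OF \<open>odd s\<close>] by auto
  then have "of_nat (k + 1) * (of_nat l - 1) * bernoulli k / (of_nat l ^ (k + 1) - 1)
      = of_int (int (k + 1) * (b + 2 * a)) / of_int (2 * (b * int s))"
    unfolding geom bk by simp
  also have "val2 \<dots> = -1"
    using assms(1) \<open>odd b\<close> \<open>odd s\<close> by (intro val2_odd_divide_double_odd) auto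
  finally show ?thesis .
qed

definition bernpoly_shift_diff :: "nat \<Rightarrow> rat \<Rightarrow> rat poly" where
  "bernpoly_shift_diff q a =
     (\<Sum>i\<le>q. smult (of_nat (q choose i) * bernoulli i) ([:1, a:] ^ (q - i) - [:1, 1:] ^ (q - i)))"

lemma poly_bernpoly_shift_diff:
  "poly (bernpoly_shift_diff q a) x = bernpoly q (a * x + 1) - bernpoly q (x + 1)"
  unfolding bernpoly_shift_diff_def bernpoly_def
  by (simp add: poly_sum sum_subtractf algebra_simps)

lemma coeff_linear_power: "coeff ([:1, a:] ^ m) (Suc 0) = of_nat m * (a :: 'a :: comm_semiring_1)"
  by (induction m) (simp_all add: coeff_0_power algebra_simps)

lemma coeff_bernpoly_shift_diff:
  assumes "k \<ge> 2"
  shows "coeff (bernpoly_shift_diff (Suc k) a) (Suc 0) = of_nat (Suc k) * (a - 1) * bernoulli k"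
proof -
  have "coeff (bernpoly_shift_diff (Suc k) a) (Suc 0)
      = (\<Sum>i\<le>Suc k. (a - 1) * of_nat (Suc k) * (of_nat (k choose i) * bernoulli i))"
    unfolding bernpoly_shift_diff_def coeff_sum
  proof (rule sum.cong)
    fix i
    have "of_nat (Suc k - i) * of_nat (Suc k choose i) = (of_nat (Suc k) * of_nat (k choose i) :: rat)"
      using binomial_absorb_comp[of "Suc k" i] by (metis diff_Suc_1 of_nat_mult)
    then show "coeff (smult (of_nat (Suc k choose i) * bernoulli i)
                 ([:1, a:] ^ (Suc k - i) - [:1, 1:] ^ (Suc k - i))) (Suc 0)
        = (a - 1) * of_nat (Suc k) * (of_nat (k choose i) * bernoulli i)"
      by (simp add: coeff_linear_power algebra_simps del: of_nat_Suc)
  qed simp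
  also have "\<dots> = (a - 1) * of_nat (Suc k) * (\<Sum>i\<le>k. of_nat (k choose i) * bernoulli i)"
    by (simp add: sum_distrib_left del: of_nat_Suc)
  also have "(\<Sum>i\<le>k. of_nat (k choose i) * bernoulli i) = bernoulli k"
    using assms by (rule sum_binomial_bernoulli)
  finally show ?thesis
    by simp
qed

lemma bernpoly_shift_diff_factorization:
  fixes f :: "rat poly"
  assumes "k \<ge> 2"
    and "\<forall>x::rat. x \<noteq> 0 \<longrightarrow>
           (bernpoly (k + 1) (a * x + 1) - bernpoly (k + 1) (x + 1)) / x = c * poly f x ^ n"
  shows "c * coeff f 0 ^ n = of_nat (k + 1) * (a - 1) * bernoulli k"
proof -
  have "poly (bernpoly_shift_diff (k + 1) a) x = poly (pCons 0 (smult c (f ^ n))) x" for x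
  proof (cases "x = 0")
    case False
    then have "(bernpoly (k + 1) (a * x + 1) - bernpoly (k + 1) (x + 1)) / x = c * poly f x ^ n"
      using assms(2) by blast
    then show ?thesis
      using False by (simp add: poly_bernpoly_shift_diff poly_power field_simps)
  qed (simp add: poly_bernpoly_shift_diff)
  then have "bernpoly_shift_diff (k + 1) a = pCons 0 (smult c (f ^ n))"
    by (simp add: poly_eq_poly_eq_iff[symmetric] fun_eq_iff)
  then show ?thesis
    using coeff_bernpoly_shift_diff[OF assms(1), of a] by (simp add: coeff_0_power)
qed

theorem mainTheorem5:
  fixes k l :: nat
  assumes "even k" and "k \<ge> 2" and "l \<ge> 2"
  shows "val2 (of_nat (k + 1) * (of_nat l - 1) * bernoulli k / (of_nat l ^ (k + 1) - 1)) = -1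
    \<and> (\<forall>n::nat. n \<ge> 2 \<and> n dvd k \<longrightarrow>
          \<not> (\<exists>f :: rat poly. \<forall>x::rat. x \<noteq> 0 \<longrightarrow>
                (bernpoly (k + 1) (of_nat l * x + 1) - bernpoly (k + 1) (x + 1)) / x
                  = (of_nat l ^ (k + 1) - 1) * (poly f x) ^ n))"
proof -
  let ?c = "(of_nat l :: rat) ^ (k + 1) - 1"
  let ?Q = "of_nat (k + 1) * (of_nat l - 1) * bernoulli k / ?c"
  have val: "val2 ?Q = -1"
    using assms by (rule val2_bernoulli_ratio)
  have "(1 :: rat) < of_nat l ^ (k + 1)"
    using assms(3) by (intro one_less_power) auto
  then have "?c \<noteq> 0"
    by simp
  have "\<not> (\<exists>f :: rat poly. \<forall>x::rat. x \<noteq> 0 \<longrightarrow>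
           (bernpoly (k + 1) (of_nat l * x + 1) - bernpoly (k + 1) (x + 1)) / x = ?c * poly f x ^ n)"
    if "n \<ge> 2" for n
  proof
    assume "\<exists>f :: rat poly. \<forall>x::rat. x \<noteq> 0 \<longrightarrow>
      (bernpoly (k + 1) (of_nat l * x + 1) - bernpoly (k + 1) (x + 1)) / x = ?c * poly f x ^ n"
    then obtain f where "?c * coeff f 0 ^ n = of_nat (k + 1) * (of_nat l - 1) * bernoulli k"
      using bernpoly_shift_diff_factorization[OF assms(2)] by blast
    then have "coeff f 0 ^ n = ?Q"
      using \<open>?c \<noteq> 0\<close> by (simp add: field_simps)
    with val val2_power_neq_minus_one[OF \<open>n \<ge> 2\<close>] show False
      by metis
  qed
  with val show ?thesis
    by blast
qed

end
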